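(* Let $G$ be a digraph, let $X\subseteq V(G)$, let $r\ge1$ and let $c=\mathrm{wcol}_r(G)$. Then the number of distinct distance-$r$ vectors $D_r^-(v,X)$, $v\in V(G)$, is bounded by $((r+2)\cdot c\cdot|X|)^c$, and in particular $\nu_r^-(G,X)\le((r+2)\cdot c\cdot|X|)^c$.
   Context: For a linear order $L$ of $V(G)$, $u$ is weakly $r$-reachable from $v$ if there is a directed path of length at most $r$ from $u$ to $v$ or from $v$ to $u$ on which $u$ is the $L$-minimum; $\mathrm{WReach}_r[G,L,v]$ is the set of such $u$; $\mathrm{wcol}_r(G)=\min_L\max_{v}|\mathrm{WReach}_r[G,L,v]|$. For $A=\{a_1,\dots,a_{|A|}\}\subseteq V(G)$ (with a fixed enumeration) and $v\in V(G)$, the distance-$r$ vector $D_r^-(v,A)=(d_1,\dots,d_{|A|})$ has $d_i=\mathrm{dist}(a_i,v)$ (length of a shortest directed path from $a_i$ to $v$) if this is at most $r$, and $d_i=\infty$ otherwise. $N_r^-(v)$ is the set of vertices from which $v$ is reachable by a directed path of length at most $r$, and $\nu_r^-(G,X)=|\{N_r^-(v)\cap X : v\in V(G)\}|$. *)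

theory Defs
  imports Main "HOL-Library.Extended_Nat"
begin

definition digraph :: "'a set \<Rightarrow> ('a \<times> 'a) set \<Rightarrow> bool" where
  "digraph V E \<longleftrightarrow> finite V \<and> E \<subseteq> V \<times> V"

definition dpath :: "'a set \<Rightarrow> ('a \<times> 'a) set \<Rightarrow> 'a list \<Rightarrow> bool" where
  "dpath V E p \<longleftrightarrow> p \<noteq> [] \<and> set p \<subseteq> V \<and> distinct p \<and>
     (\<forall>i. Suc i < length p \<longrightarrow> (p ! i, p ! Suc i) \<in> E)"

definition plen :: "'a list \<Rightarrow> nat" where
  "plen p = length p - 1"

definition path_from_to :: "'a set \<Rightarrow> ('a \<times> 'a) set \<Rightarrow> 'a list \<Rightarrow> 'a \<Rightarrow> 'a \<Rightarrow> bool" where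
  "path_from_to V E p u v \<longleftrightarrow> dpath V E p \<and> hd p = u \<and> last p = v"

text \<open>Weak r-reachability w.r.t. a linear order L on V (L a relation, (x,y) \<in> L meaning x \<le>_L y).\<close>

definition WReach :: "'a set \<Rightarrow> ('a \<times> 'a) set \<Rightarrow> nat \<Rightarrow> ('a \<times> 'a) set \<Rightarrow> 'a \<Rightarrow> 'a set" where
  "WReach V E r L v = {u \<in> V. \<exists>p. (path_from_to V E p u v \<or> path_from_to V E p v u)
       \<and> plen p \<le> r \<and> (\<forall>w\<in>set p. (u, w) \<in> L)}"

definition wcol :: "'a set \<Rightarrow> ('a \<times> 'a) set \<Rightarrow> nat \<Rightarrow> nat" where
  "wcol V E r = Min {Max {card (WReach V E r L v) | v. v \<in> V} | L. linear_order_on V L}"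

definition ddist :: "'a set \<Rightarrow> ('a \<times> 'a) set \<Rightarrow> 'a \<Rightarrow> 'a \<Rightarrow> enat" where
  "ddist V E a v = (if \<exists>p. path_from_to V E p a v
      then enat (LEAST k. \<exists>p. path_from_to V E p a v \<and> plen p = k) else \<infinity>)"

text \<open>Distance-r vector D_r^-(v,A) for A given by a fixed enumeration (list) as.\<close>

definition Dvec :: "'a set \<Rightarrow> ('a \<times> 'a) set \<Rightarrow> nat \<Rightarrow> 'a \<Rightarrow> 'a list \<Rightarrow> enat list" where
  "Dvec V E r v as = map (\<lambda>a. if ddist V E a v \<le> enat r then ddist V E a v else \<infinity>) as"

definition Nin :: "'a set \<Rightarrow> ('a \<times> 'a) set \<Rightarrow> nat \<Rightarrow> 'a \<Rightarrow> 'a set" where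
  "Nin V E r v = {u \<in> V. \<exists>p. path_from_to V E p u v \<and> plen p \<le> r}"

definition nu_in :: "'a set \<Rightarrow> ('a \<times> 'a) set \<Rightarrow> nat \<Rightarrow> 'a set \<Rightarrow> nat" where
  "nu_in V E r X = card {Nin V E r v \<inter> X | v. v \<in> V}"

end

theory Submission
  imports Defs
begin

(* Fix a linear order L attaining wcol_r and let Y be the union of WReach_r[a] over a in X.
   The profile of v records, for each m in Y that is weakly r-reachable from v, the distance
   dist(m, v) (if at most r).  It has at most c entries from a set of size (r + 1) c |X|, so
   there are at most ((r + 2) c |X|)^c profiles.  The profile determines D_r(v, X): the
   L-minimum m of a shortest path from a to v lies in WReach_r[a] and WReach_r[v] and splits
   the path, so dist(a, v) = dist(a, m) + dist(m, v) with (m, dist(m, v)) in the profile.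
   Finally N_r(v) \<inter> X can be read off D_r(v, X). *)

definition walk :: "'a set \<Rightarrow> ('a \<times> 'a) set \<Rightarrow> 'a list \<Rightarrow> bool" where
  "walk V E p \<longleftrightarrow> p \<noteq> [] \<and> set p \<subseteq> V \<and> successively (\<lambda>x y. (x, y) \<in> E) p"

lemma dpath_iff_walk_distinct: "dpath V E p \<longleftrightarrow> walk V E p \<and> distinct p"
  unfolding dpath_def walk_def successively_conv_nth by auto

lemma walk_shortens_to_dpath:
  "walk V E p \<Longrightarrow> \<exists>q. dpath V E q \<and> hd q = hd p \<and> last q = last p \<and> length q \<le> length p"
proof (induction "length p" arbitrary: p rule: less_induct)
  case less
  show ?case
  proof (cases "distinct p")
    case True
    then show ?thesis using less.prems by (auto simp: dpath_iff_walk_distinct)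
  next
    case False
    then obtain xs ys zs y where p: "p = xs @ [y] @ ys @ [y] @ zs"
      using not_distinct_decomp by blast
    let ?q = "xs @ [y] @ zs"
    have "walk V E ?q" using less.prems unfolding p walk_def
      by (auto simp: successively_append_iff successively_Cons)
    moreover have "length ?q < length p" using p by simp
    moreover have "hd ?q = hd p" "last ?q = last p" using p by (cases xs; simp)+
    ultimately show ?thesis using less.hyps by fastforce
  qed
qed

lemma path_from_to_append:
  assumes "path_from_to V E p a m" and "path_from_to V E q m v"
  shows "\<exists>s. path_from_to V E s a v \<and> plen s \<le> plen p + plen q"
proof -
  obtain p' where p: "p = p' @ [m]" "walk V E (p' @ [m])" "hd (p' @ [m]) = a"
    using assms(1) unfolding path_from_to_def dpath_iff_walk_distinct walk_def
    by (metis append_butlast_last_id)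
  obtain q' where q: "q = m # q'" "walk V E (m # q')" "last (m # q') = v"
    using assms(2) unfolding path_from_to_def dpath_iff_walk_distinct walk_def
    by (metis list.collapse)
  have "walk V E (p' @ m # q')"
    using p(2) q(2) unfolding walk_def by (auto simp: successively_append_iff)
  then obtain s where s: "dpath V E s" "hd s = hd (p' @ m # q')" "last s = last (p' @ m # q')"
    "length s \<le> length (p' @ m # q')"
    using walk_shortens_to_dpath by blast
  have "hd (p' @ m # q') = a" using p(3) by (cases p') auto
  moreover have "last (p' @ m # q') = v" using q(3) by simp
  moreover have "plen s \<le> plen p + plen q" using s(4) unfolding p q plen_def by simp
  ultimately show ?thesis using s unfolding path_from_to_def by blast
qed

lemma walk_take_drop:
  assumes "walk V E p" and "i < length p"
  shows "walk V E (take (Suc i) p)" and "walk V E (drop i p)"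
proof -
  have "successively (\<lambda>x y. (x, y) \<in> E) (take (Suc i) p @ drop (Suc i) p)"
    "successively (\<lambda>x y. (x, y) \<in> E) (take i p @ drop i p)"
    using assms(1) unfolding walk_def by simp_all
  then show "walk V E (take (Suc i) p)" "walk V E (drop i p)"
    using assms set_take_subset set_drop_subset unfolding walk_def successively_append_iff
    by (auto dest: in_set_takeD in_set_dropD)
qed

lemma path_from_to_take_drop:
  assumes "path_from_to V E p a v" and "i < length p"
  shows "path_from_to V E (take (Suc i) p) a (p ! i)" and "path_from_to V E (drop i p) (p ! i) v"
proof -
  have p: "walk V E p" "distinct p" "hd p = a" "last p = v"
    using assms(1) unfolding path_from_to_def dpath_iff_walk_distinct by simp_all
  have "hd (take (Suc i) p) = a" using p(3) by simp
  moreover have "last (take (Suc i) p) = p ! i" using assms(2) by (simp add: take_Suc_conv_app_nth)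
  ultimately show "path_from_to V E (take (Suc i) p) a (p ! i)"
    using walk_take_drop(1)[OF p(1) assms(2)] p(2)
    unfolding path_from_to_def dpath_iff_walk_distinct by simp
  show "path_from_to V E (drop i p) (p ! i) v"
    using walk_take_drop(2)[OF p(1) assms(2)] p(2,4) assms(2)
    unfolding path_from_to_def dpath_iff_walk_distinct by (simp add: hd_drop_conv_nth)
qed

lemma ddist_eq_enat_shortest_path:
  assumes "ddist V E a v = enat d"
  shows "\<exists>p. path_from_to V E p a v \<and> plen p = d"
proof -
  let ?P = "\<lambda>k. \<exists>p. path_from_to V E p a v \<and> plen p = k"
  have ex: "\<exists>p. path_from_to V E p a v"
  proof (rule ccontr)
    assume "\<nexists>p. path_from_to V E p a v"
    then show False using assms unfolding ddist_def by simp
  qed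
  then have "\<exists>k. ?P k" by blast
  then have "?P (Least ?P)" by (rule LeastI_ex)
  moreover have "ddist V E a v = enat (Least ?P)" using ex unfolding ddist_def by simp
  ultimately show ?thesis using assms by simp
qed

lemma ddist_le_plen:
  assumes "path_from_to V E p a v"
  shows "ddist V E a v \<le> enat (plen p)"
  using assms unfolding ddist_def by (auto intro: Least_le)

lemma ddist_le_enat_iff:
  "ddist V E a v \<le> enat k \<longleftrightarrow> (\<exists>p. path_from_to V E p a v \<and> plen p \<le> k)"
proof
  assume "ddist V E a v \<le> enat k"
  then obtain d where "ddist V E a v = enat d" "d \<le> k" by (cases "ddist V E a v") auto
  then show "\<exists>p. path_from_to V E p a v \<and> plen p \<le> k"
    using ddist_eq_enat_shortest_path by fastforce
next
  assume "\<exists>p. path_from_to V E p a v \<and> plen p \<le> k"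
  then obtain p where "path_from_to V E p a v" "plen p \<le> k" by blast
  then show "ddist V E a v \<le> enat k"
    using ddist_le_plen[of V E p a v] by (meson enat_ord_simps(1) order_trans)
qed

lemma ddist_triangle: "ddist V E a v \<le> ddist V E a m + ddist V E m v"
proof (cases "ddist V E a m"; cases "ddist V E m v")
  fix i e assume "ddist V E a m = enat i" "ddist V E m v = enat e"
  then obtain p q where "path_from_to V E p a m" "plen p = i" "path_from_to V E q m v" "plen q = e"
    using ddist_eq_enat_shortest_path by metis
  then obtain s where "path_from_to V E s a v" "plen s \<le> i + e"
    using path_from_to_append by fastforce
  then show ?thesis using \<open>ddist V E a m = enat i\<close> \<open>ddist V E m v = enat e\<close>
    using ddist_le_enat_iff by fastforce
qed simp_all

lemma linear_order_on_finite_has_least: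
  assumes "linear_order_on V L" and "finite S" "S \<noteq> {}" "S \<subseteq> V"
  shows "\<exists>m\<in>S. \<forall>w\<in>S. (m, w) \<in> L"
  using assms(2-4)
proof (induction S rule: finite_ne_induct)
  case (singleton x)
  then show ?case using assms(1) by (auto simp: order_on_defs refl_on_def)
next
  case (insert x F)
  then obtain m where m: "m \<in> F" "\<forall>w\<in>F. (m, w) \<in> L" by auto
  have L: "trans L" "refl_on V L" "total_on V L" using assms(1) by (auto simp: order_on_defs)
  have V: "x \<in> V" "m \<in> V" using insert m by auto
  show ?case
  proof (cases "(x, m) \<in> L")
    case True
    then have "\<forall>w\<in>F. (x, w) \<in> L" using m(2) L(1) by (meson transD)
    moreover have "(x, x) \<in> L" using L(2) V(1) by (simp add: refl_on_def)
    ultimately show ?thesis by blast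
  next
    case False
    then have "(m, x) \<in> L" using L(2,3) V by (cases "x = m") (auto simp: refl_on_def total_on_def)
    then show ?thesis using m by blast
  qed
qed

lemma self_in_WReach:
  assumes "linear_order_on V L" and "v \<in> V"
  shows "v \<in> WReach V E r L v"
proof -
  have "(v, v) \<in> L" using assms by (simp add: order_on_defs refl_on_def)
  then show ?thesis using assms(2) unfolding WReach_def
    by (intro CollectI conjI exI[of _ "[v]"]) (simp_all add: path_from_to_def dpath_def plen_def)
qed

lemma ddist_split_at_WReach:
  assumes L: "linear_order_on V L" and r: "ddist V E a v \<le> enat r"
  shows "\<exists>m\<in>WReach V E r L a \<inter> WReach V E r L v.
           ddist V E a m + ddist V E m v = ddist V E a v"
proof -
  obtain d where d: "ddist V E a v = enat d" "d \<le> r" using r by (cases "ddist V E a v") auto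
  obtain p where p: "path_from_to V E p a v" "plen p = d"
    using ddist_eq_enat_shortest_path[OF d(1)] by blast
  have pV: "set p \<subseteq> V" and pn: "p \<noteq> []"
    using p(1) by (auto simp: path_from_to_def dpath_def)
  obtain m where m: "m \<in> set p" "\<forall>w\<in>set p. (m, w) \<in> L"
    using linear_order_on_finite_has_least[OF L _ _ pV] pn by auto
  obtain i where i: "i < length p" "p ! i = m" using m(1) by (auto simp: in_set_conv_nth)
  let ?p1 = "take (Suc i) p" and ?p2 = "drop i p"
  have P: "path_from_to V E ?p1 a m" "path_from_to V E ?p2 m v"
    using path_from_to_take_drop[OF p(1) i(1)] i(2) by simp_all
  have len: "plen ?p1 = i" "plen ?p2 = d - i" "i \<le> d" using i p(2) unfolding plen_def by auto
  have "\<forall>w\<in>set ?p1. (m, w) \<in> L" "\<forall>w\<in>set ?p2. (m, w) \<in> L"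
    using m(2) by (auto dest: in_set_takeD in_set_dropD)
  moreover have "plen ?p1 \<le> r" "plen ?p2 \<le> r" using len d(2) by simp_all
  moreover have "m \<in> V" using m(1) pV by blast
  ultimately have "m \<in> WReach V E r L a \<inter> WReach V E r L v"
    using P unfolding WReach_def by blast
  moreover have "ddist V E a m + ddist V E m v \<le> enat i + enat (d - i)"
    using ddist_le_plen[OF P(1)] ddist_le_plen[OF P(2)] len by (intro add_mono) simp_all
  then have "ddist V E a m + ddist V E m v = ddist V E a v"
    using ddist_triangle[of V E a v m] len(3) d(1) by (simp add: antisym)
  ultimately show ?thesis by blast
qed

definition dist_profile ::
  "'a set \<Rightarrow> ('a \<times> 'a) set \<Rightarrow> nat \<Rightarrow> ('a \<times> 'a) set \<Rightarrow> 'a set \<Rightarrow> 'a \<Rightarrow> ('a \<times> nat) set" where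
  "dist_profile V E r L X v = {(m, e). m \<in> WReach V E r L v \<and> (\<exists>a\<in>X. m \<in> WReach V E r L a)
     \<and> e \<le> r \<and> ddist V E m v = enat e}"

lemma dist_profile_subset: "dist_profile V E r L X v \<subseteq> (\<Union>a\<in>X. WReach V E r L a) \<times> {..r}"
  unfolding dist_profile_def by auto

lemma card_dist_profile_le:
  assumes "finite V"
  shows "card (dist_profile V E r L X v) \<le> card (WReach V E r L v)"
proof -
  have "dist_profile V E r L X v \<subseteq> (\<lambda>m. (m, the_enat (ddist V E m v))) ` WReach V E r L v"
    unfolding dist_profile_def by force
  moreover have "finite (WReach V E r L v)"
    using assms by (rule finite_subset[rotated]) (auto simp: WReach_def)
  ultimately show ?thesis by (meson card_image_le card_mono finite_imageI le_trans)
qed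

lemma ddist_le_if_dist_profile_eq:
  assumes L: "linear_order_on V L" and a: "a \<in> X"
    and eq: "dist_profile V E r L X u = dist_profile V E r L X v"
    and r: "ddist V E a v \<le> enat r"
  shows "ddist V E a u \<le> ddist V E a v"
proof -
  obtain m where m: "m \<in> WReach V E r L a" "m \<in> WReach V E r L v"
    and split: "ddist V E a m + ddist V E m v = ddist V E a v"
    using ddist_split_at_WReach[OF L r] by blast
  have "ddist V E m v \<le> enat r" using split r by (metis add.commute le_iff_add order_trans)
  then obtain e where e: "ddist V E m v = enat e" "e \<le> r" by (cases "ddist V E m v") auto
  then have "(m, e) \<in> dist_profile V E r L X u" using m a eq unfolding dist_profile_def by blast
  then have "ddist V E m u = ddist V E m v" using e unfolding dist_profile_def by simp
  then show ?thesis using ddist_triangle[of V E a u m] split by simp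
qed

lemma Dvec_eq_if_dist_profile_eq:
  assumes "linear_order_on V L"
    and "dist_profile V E r L (set xs) u = dist_profile V E r L (set xs) v"
  shows "Dvec V E r u xs = Dvec V E r v xs"
  unfolding Dvec_def
proof (rule map_cong[OF refl])
  fix a assume "a \<in> set xs"
  then have "ddist V E a v \<le> enat r \<Longrightarrow> ddist V E a u \<le> ddist V E a v"
    "ddist V E a u \<le> enat r \<Longrightarrow> ddist V E a v \<le> ddist V E a u"
    using ddist_le_if_dist_profile_eq[OF assms(1)] assms(2) by metis+
  then show "(if ddist V E a u \<le> enat r then ddist V E a u else \<infinity>)
      = (if ddist V E a v \<le> enat r then ddist V E a v else \<infinity>)"
    by (metis antisym order_trans)
qed

lemma Nin_inter_eq_if_Dvec_eq:
  assumes "set xs \<subseteq> V" and "Dvec V E r u xs = Dvec V E r v xs"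
  shows "Nin V E r u \<inter> set xs = Nin V E r v \<inter> set xs"
proof -
  have Nin: "Nin V E r w \<inter> set xs = {a \<in> set xs. ddist V E a w \<le> enat r}" for w
    using assms(1) unfolding Nin_def ddist_le_enat_iff by auto
  have "ddist V E a u \<le> enat r \<longleftrightarrow> ddist V E a v \<le> enat r" if "a \<in> set xs" for a
    using assms(2) that unfolding Dvec_def by (auto split: if_splits)
  then show ?thesis unfolding Nin by blast
qed

lemma card_image_le_card_image_if_factors:
  assumes "finite A" and "\<And>x y. x \<in> A \<Longrightarrow> y \<in> A \<Longrightarrow> g x = g y \<Longrightarrow> f x = f y"
  shows "card (f ` A) \<le> card (g ` A)"
proof -
  have "f x = f (inv_into A g (g x))" if "x \<in> A" for x
    using that by (intro assms(2)) (auto simp: inv_into_into f_inv_into_f)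
  then have "f ` A = (\<lambda>z. f (inv_into A g z)) ` g ` A"
    unfolding image_image by (rule image_cong[OF refl])
  then show ?thesis using assms(1) by (simp add: card_image_le)
qed

lemma card_bounded_subsets_le:
  assumes "finite T"
  shows "card {S. S \<subseteq> T \<and> card S \<le> c} \<le> (card T + 1) ^ c"
proof -
  \<comment> \<open>Every such S is the set of Some-entries of a list of length c over T extended by None.\<close>
  let ?O = "insert None (Some ` T)"
  let ?lists = "{os. set os \<subseteq> ?O \<and> length os = c}"
  let ?h = "\<lambda>os. {x. Some x \<in> set os}"
  have "{S. S \<subseteq> T \<and> card S \<le> c} \<subseteq> ?h ` ?lists"
  proof
    fix S assume S: "S \<in> {S. S \<subseteq> T \<and> card S \<le> c}"
    then obtain xs where xs: "set xs = S" "distinct xs"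
      using assms finite_distinct_list finite_subset by (metis mem_Collect_eq)
    then have "length xs \<le> c" using S distinct_card by fastforce
    then show "S \<in> ?h ` ?lists" using xs S
      by (intro image_eqI[of _ _ "map Some xs @ replicate (c - length xs) None"]) auto
  qed
  then have "card {S. S \<subseteq> T \<and> card S \<le> c} \<le> card (?h ` ?lists)"
    using assms by (intro card_mono) (simp_all add: finite_lists_length_eq)
  also have "\<dots> \<le> card ?lists" using assms by (intro card_image_le) (simp add: finite_lists_length_eq)
  also have "\<dots> = (card T + 1) ^ c"
    using assms by (simp add: card_lists_length_eq card_image)
  finally show ?thesis .
qed

lemma card_Dvec_image_le:
  assumes V: "finite V" and L: "linear_order_on V L"
    and W: "\<forall>v\<in>V. card (WReach V E r L v) \<le> c"
    and xs: "set xs \<subseteq> V" "xs \<noteq> []"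
  shows "card ((\<lambda>v. Dvec V E r v xs) ` V) \<le> ((r + 2) * c * length xs) ^ c"
proof -
  let ?Y = "\<Union>a\<in>set xs. WReach V E r L a"
  let ?profile = "dist_profile V E r L (set xs)"
  have fW: "finite (WReach V E r L v)" for v
    using V by (rule finite_subset[rotated]) (auto simp: WReach_def)
  have "card ?Y \<le> (\<Sum>a\<in>set xs. card (WReach V E r L a))" by (rule card_UN_le) simp
  also have "\<dots> \<le> card (set xs) * c"
    using W xs(1) sum_bounded_above[of "set xs" "\<lambda>a. card (WReach V E r L a)" c] by auto
  also have "\<dots> \<le> length xs * c" by (simp add: card_length)
  finally have cY: "card ?Y \<le> length xs * c" .
  obtain a where a: "a \<in> set xs" using xs(2) by (cases xs) auto
  then have "a \<in> WReach V E r L a" using self_in_WReach[OF L] xs(1) by blast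
  then have "0 < card (WReach V E r L a)" using fW by (auto simp: card_gt_0_iff)
  then have "0 < c" using W a xs(1) by fastforce
  then have c: "1 \<le> length xs * c" using xs(2) by (simp add: Suc_le_eq)
  have "card ((\<lambda>v. Dvec V E r v xs) ` V) \<le> card (?profile ` V)"
    using V by (intro card_image_le_card_image_if_factors Dvec_eq_if_dist_profile_eq[OF L])
  also have "\<dots> \<le> card {S. S \<subseteq> ?Y \<times> {..r} \<and> card S \<le> c}"
  proof (rule card_mono)
    show "finite {S. S \<subseteq> ?Y \<times> {..r} \<and> card S \<le> c}" using fW by simp
    show "?profile ` V \<subseteq> {S. S \<subseteq> ?Y \<times> {..r} \<and> card S \<le> c}"
      using dist_profile_subset[of V E r L "set xs"] card_dist_profile_le[OF V, of E r L "set xs"] W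
      by (blast intro: le_trans)
  qed
  also have "\<dots> \<le> (card (?Y \<times> {..r}) + 1) ^ c"
    using fW by (intro card_bounded_subsets_le) auto
  also have "\<dots> \<le> ((r + 2) * c * length xs) ^ c"
  proof (rule power_mono)
    have "card (?Y \<times> {..r}) = card ?Y * (r + 1)" by (simp add: card_cartesian_product)
    also have "\<dots> \<le> length xs * c * (r + 1)" using cY by (rule mult_le_mono1)
    finally have "card (?Y \<times> {..r}) + 1 \<le> length xs * c * (r + 1) + length xs * c"
      using c by linarith
    then show "card (?Y \<times> {..r}) + 1 \<le> (r + 2) * c * length xs" by (simp add: algebra_simps)
  qed simp
  finally show ?thesis .
qed

lemma nu_in_le_card_Dvec_image:
  assumes "finite V" and "set xs \<subseteq> V"
  shows "nu_in V E r (set xs) \<le> card ((\<lambda>v. Dvec V E r v xs) ` V)"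
  unfolding nu_in_def Setcompr_eq_image
  using assms by (intro card_image_le_card_image_if_factors Nin_inter_eq_if_Dvec_eq) simp_all

lemma wcol_attained:
  assumes "finite V"
  shows "\<exists>L. linear_order_on V L \<and> (\<forall>v\<in>V. card (WReach V E r L v) \<le> wcol V E r)"
proof -
  let ?orders = "{L. linear_order_on V L}"
  let ?width = "\<lambda>L. Max ((\<lambda>v. card (WReach V E r L v)) ` V)"
  have "?orders \<subseteq> Pow (V \<times> V)" by (auto simp: order_on_defs)
  then have "finite ?orders" using assms by (meson finite_Pow_iff finite_SigmaI finite_subset)
  moreover have "?orders \<noteq> {}" using well_order_on[of V] by (auto simp: well_order_on_def)
  moreover have "wcol V E r = Min (?width ` ?orders)"
    unfolding wcol_def setcompr_eq_image Setcompr_eq_image by simp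
  ultimately obtain L where "linear_order_on V L" "wcol V E r = ?width L"
    by (metis (no_types, lifting) Min_in finite_imageI image_iff image_is_empty mem_Collect_eq)
  then show ?thesis using assms by auto
qed

theorem mainTheorem14:
  fixes V :: "'a set" and E :: "('a \<times> 'a) set" and xs :: "'a list" and r c :: nat
  assumes "digraph V E"
    and "set xs \<subseteq> V" and "distinct xs" and "xs \<noteq> []"
    and "r \<ge> 1"
    and "c = wcol V E r"
  shows "card {Dvec V E r v xs | v. v \<in> V} \<le> ((r + 2) * c * length xs) ^ c
    \<and> nu_in V E r (set xs) \<le> ((r + 2) * c * card (set xs)) ^ c"
proof -
  have V: "finite V" using assms(1) by (simp add: digraph_def)
  obtain L where "linear_order_on V L" "\<forall>v\<in>V. card (WReach V E r L v) \<le> c"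
    using wcol_attained[OF V] assms(6) by blast
  then have "card ((\<lambda>v. Dvec V E r v xs) ` V) \<le> ((r + 2) * c * length xs) ^ c"
    using card_Dvec_image_le V assms(2,4) by blast
  moreover have "nu_in V E r (set xs) \<le> card ((\<lambda>v. Dvec V E r v xs) ` V)"
    using nu_in_le_card_Dvec_image V assms(2) by blast
  ultimately show ?thesis unfolding Setcompr_eq_image using distinct_card[OF assms(3)] by simp
qed

end
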